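(* $\mathrm{1QFA}/n\neq\mathrm{1QFA}/Rn$.
   Context: A 1qfa is a one-way measure-many quantum finite automaton. For equal-length strings $x,y$, $\genfrac{[}{]}{0pt}{}{x}{y}$ is the two-track string with $x$ on the upper track and $y$ on the lower track. $\mathrm{1QFA}/n$ is the family of languages $L$ for which there exist a 1qfa $M$, $\varepsilon\in[0,1/2)$ and a deterministic advice function $h:\mathbb{N}\to\Gamma^*$ with $|h(n)|=n$ such that $M$ on $\genfrac{[}{]}{0pt}{}{x}{h(|x|)}$ outputs $L(x)$ with probability at least $1-\varepsilon$ for every $x$. $\mathrm{1QFA}/Rn$ is defined analogously with randomized advice, i.e. a probability ensemble $\{D_n\}$ ($D_n$ a distribution on $\Gamma^n$), where $M$ on $\genfrac{[}{]}{0pt}{}{x}{y}$ with $y\sim D_n$ outputs $L(x)$ with probability at least $1-\varepsilon$. *)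

theory Defs
  imports "HOL-Probability.Probability"
begin

datatype 'c tsym = LEnd | REnd | Sym 'c

text \<open>A one-way measure-many quantum finite automaton (Kondacs--Watrous style).
  States are 0..<nst M; delta a is the transition matrix for tape symbol a;
  q0 is the initial state; acc / rej are the accepting / rejecting states,
  all other states are non-halting.\<close>
record 's qfa =
  nst :: nat
  delta :: "'s \<Rightarrow> nat \<Rightarrow> nat \<Rightarrow> complex"
  q0 :: nat
  acc :: "nat set"
  rej :: "nat set"

definition unitary_mat :: "nat \<Rightarrow> (nat \<Rightarrow> nat \<Rightarrow> complex) \<Rightarrow> bool" where
  "unitary_mat k U \<longleftrightarrow>
     (\<forall>i<k. \<forall>j<k. (\<Sum>l<k. cnj (U l i) * U l j) = (if i = j then 1 else 0))"

definition wf_qfa :: "'c set \<Rightarrow> 'c tsym qfa \<Rightarrow> bool" where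
  "wf_qfa A M \<longleftrightarrow> q0 M < nst M \<and> acc M \<subseteq> {..<nst M} \<and> rej M \<subseteq> {..<nst M}
     \<and> acc M \<inter> rej M = {}
     \<and> (\<forall>a \<in> {LEnd, REnd} \<union> Sym ` A. unitary_mat (nst M) (delta M a))"

definition mat_app :: "nat \<Rightarrow> (nat \<Rightarrow> nat \<Rightarrow> complex) \<Rightarrow> (nat \<Rightarrow> complex) \<Rightarrow> nat \<Rightarrow> complex" where
  "mat_app k U v = (\<lambda>i. if i < k then (\<Sum>j<k. U i j * v j) else 0)"

definition proj :: "nat set \<Rightarrow> (nat \<Rightarrow> complex) \<Rightarrow> nat \<Rightarrow> complex" where
  "proj S v = (\<lambda>i. if i \<in> S then v i else 0)"

definition normsq :: "nat \<Rightarrow> (nat \<Rightarrow> complex) \<Rightarrow> real" where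
  "normsq k v = (\<Sum>i<k. (cmod (v i))\<^sup>2)"

text \<open>Measure-many run on a tape content, starting from (unnormalised) state vector v:
  returns (total acceptance probability, total rejection probability).\<close>
fun qrun :: "'s qfa \<Rightarrow> 's list \<Rightarrow> (nat \<Rightarrow> complex) \<Rightarrow> real \<times> real" where
  "qrun M [] v = (0, 0)"
| "qrun M (a # w) v =
     (let u = mat_app (nst M) (delta M a) v;
          r = qrun M w (proj ({..<nst M} - acc M - rej M) u)
      in (normsq (nst M) (proj (acc M) u) + fst r, normsq (nst M) (proj (rej M) u) + snd r))"

definition basis :: "nat \<Rightarrow> nat \<Rightarrow> complex" where
  "basis q = (\<lambda>i. if i = q then 1 else 0)"

definition p_acc :: "'c tsym qfa \<Rightarrow> 'c list \<Rightarrow> real" where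
  "p_acc M w = fst (qrun M (LEnd # map Sym w @ [REnd]) (basis (q0 M)))"

definition p_rej :: "'c tsym qfa \<Rightarrow> 'c list \<Rightarrow> real" where
  "p_rej M w = snd (qrun M (LEnd # map Sym w @ [REnd]) (basis (q0 M)))"

text \<open>Alphabets are finite sets of natural-number codes; a language over Sigma is a set
  of words in lists Sigma. The two-track string [x; y] is zip x y.\<close>

definition in_1QFA_n :: "nat set \<Rightarrow> nat list set \<Rightarrow> bool" where
  "in_1QFA_n \<Sigma> L \<longleftrightarrow> (\<exists>(\<Gamma>::nat set) (M::(nat \<times> nat) tsym qfa) (\<epsilon>::real) (h::nat \<Rightarrow> nat list).
     finite \<Gamma> \<and> wf_qfa (\<Sigma> \<times> \<Gamma>) M \<and> 0 \<le> \<epsilon> \<and> \<epsilon> < 1/2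
     \<and> (\<forall>n. length (h n) = n \<and> set (h n) \<subseteq> \<Gamma>)
     \<and> (\<forall>x \<in> lists \<Sigma>.
          (x \<in> L \<longrightarrow> p_acc M (zip x (h (length x))) \<ge> 1 - \<epsilon>)
        \<and> (x \<notin> L \<longrightarrow> p_rej M (zip x (h (length x))) \<ge> 1 - \<epsilon>)))"

definition in_1QFA_Rn :: "nat set \<Rightarrow> nat list set \<Rightarrow> bool" where
  "in_1QFA_Rn \<Sigma> L \<longleftrightarrow> (\<exists>(\<Gamma>::nat set) (M::(nat \<times> nat) tsym qfa) (\<epsilon>::real) (D::nat \<Rightarrow> nat list pmf).
     finite \<Gamma> \<and> wf_qfa (\<Sigma> \<times> \<Gamma>) M \<and> 0 \<le> \<epsilon> \<and> \<epsilon> < 1/2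
     \<and> (\<forall>n. set_pmf (D n) \<subseteq> {y. length y = n \<and> set y \<subseteq> \<Gamma>})
     \<and> (\<forall>x \<in> lists \<Sigma>.
          (x \<in> L \<longrightarrow> measure_pmf.expectation (D (length x)) (\<lambda>y. p_acc M (zip x y)) \<ge> 1 - \<epsilon>)
        \<and> (x \<notin> L \<longrightarrow> measure_pmf.expectation (D (length x)) (\<lambda>y. p_rej M (zip x y)) \<ge> 1 - \<epsilon>)))"

definition QFA_n :: "(nat set \<times> nat list set) set" where
  "QFA_n = {(\<Sigma>, L). finite \<Sigma> \<and> \<Sigma> \<noteq> {} \<and> L \<subseteq> lists \<Sigma> \<and> in_1QFA_n \<Sigma> L}"

definition QFA_Rn :: "(nat set \<times> nat list set) set" where
  "QFA_Rn = {(\<Sigma>, L). finite \<Sigma> \<and> \<Sigma> \<noteq> {} \<and> L \<subseteq> lists \<Sigma> \<and> in_1QFA_Rn \<Sigma> L}"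

end

theory Submission
  imports Defs "HOL-Library.Function_Algebras"
begin

text \<open>The separating language consists of the binary words of odd length and the squares \<open>ww\<close>.
  With randomized advice \<open>r (-r)\<close> for \<open>r\<close> uniform in \<open>\<int>\<^sub>4\<^sup>m\<close>, a reversible counter modulo 4
  that adds up the advice digits standing under the 1's of the input reaches the total
  \<open>\<Sum> (w\<^sub>i - w'\<^sub>i) r\<^sub>i\<close> on \<open>w w'\<close>; this vanishes always if \<open>w = w'\<close> and with probability exactly 1/4
  otherwise.

  With deterministic advice, the configuration after the first half (acceptance probability so far
  and non-halting part of the state vector) lies in a bounded region of a space of fixed dimension,
  and the acceptance probability after a common suffix depends Lipschitz-continuously on it, because
  its square root is a seminorm of the initial vector. Among the \<open>2\<^sup>m\<close> first halves, two different
  ones \<open>u, u'\<close> therefore lead to so close configurations that \<open>u u\<close> and \<open>u' u\<close> are accepted with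
  almost the same probability, although the first must be accepted and the second rejected.\<close>

lemma mat_app_add: "mat_app k U (v + w) = mat_app k U v + mat_app k U w"
  by (auto simp: mat_app_def fun_eq_iff algebra_simps sum.distrib)

lemma proj_add: "proj S (v + w) = proj S v + proj S w"
  by (auto simp: proj_def fun_eq_iff)

lemma normsq_nonneg: "0 \<le> normsq k v"
  by (simp add: normsq_def sum_nonneg)

lemma sqrt_normsq_eq_L2_set: "sqrt (normsq k v) = L2_set (\<lambda>i. cmod (v i)) {..<k}"
  by (simp add: normsq_def L2_set_def)

lemma sqrt_normsq_add_le: "sqrt (normsq k (v + w)) \<le> sqrt (normsq k v) + sqrt (normsq k w)"
proof -
  have "L2_set (\<lambda>i. cmod ((v + w) i)) {..<k} \<le> L2_set (\<lambda>i. cmod (v i) + cmod (w i)) {..<k}"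
    by (rule L2_set_mono) (auto simp: norm_triangle_ineq)
  also have "\<dots> \<le> L2_set (\<lambda>i. cmod (v i)) {..<k} + L2_set (\<lambda>i. cmod (w i)) {..<k}"
    by (rule L2_set_triangle_ineq)
  finally show ?thesis
    by (simp add: sqrt_normsq_eq_L2_set)
qed

lemma sqrt_normsq_le_sum: "sqrt (normsq k v) \<le> (\<Sum>i<k. cmod (v i))"
  unfolding sqrt_normsq_eq_L2_set by (rule L2_set_le_sum) simp

lemma cmod_le_sqrt_normsq:
  assumes "i < k"
  shows "cmod (v i) \<le> sqrt (normsq k v)"
proof -
  have "(cmod (v i))\<^sup>2 \<le> normsq k v"
    unfolding normsq_def by (rule member_le_sum) (use assms in auto)
  then show ?thesis
    by (simp add: real_le_rsqrt)
qed

lemma normsq_basis: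
  assumes "q < k"
  shows "normsq k (basis q) = 1"
proof -
  have "(cmod (basis q i))\<^sup>2 = (if i = q then 1 else 0)" for i
    by (auto simp: basis_def)
  then show ?thesis
    using assms by (simp add: normsq_def)
qed

lemma normsq_zero: "normsq k 0 = 0"
  by (simp add: normsq_def)

lemma proj_basis: "proj S (basis q) = (if q \<in> S then basis q else 0)"
  by (auto simp: proj_def basis_def fun_eq_iff)

lemma normsq_minus_commute: "normsq k (v - w) = normsq k (w - v)"
  by (simp add: normsq_def norm_minus_commute)

lemma of_real_normsq: "complex_of_real (normsq k v) = (\<Sum>i<k. cnj (v i) * v i)"
  unfolding normsq_def of_real_sum
  by (rule sum.cong) (simp_all only: complex_norm_square mult.commute)

lemma normsq_mat_app_unitary:
  assumes U: "unitary_mat k U"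
  shows "normsq k (mat_app k U v) = normsq k v"
proof -
  have "complex_of_real (normsq k (mat_app k U v))
      = (\<Sum>i<k. cnj (\<Sum>j<k. U i j * v j) * (\<Sum>l<k. U i l * v l))"
    by (simp add: of_real_normsq mat_app_def)
  also have "\<dots> = (\<Sum>i<k. \<Sum>j<k. \<Sum>l<k. (cnj (v j) * v l) * (cnj (U i j) * U i l))"
    by (simp only: cnj_sum sum_product) (intro sum.cong refl, simp add: mult_ac)
  also have "\<dots> = (\<Sum>j<k. \<Sum>l<k. (cnj (v j) * v l) * (\<Sum>i<k. cnj (U i j) * U i l))"
    by (subst sum.swap, rule sum.cong[OF refl], subst sum.swap) (simp add: sum_distrib_left)
  also have "\<dots> = (\<Sum>j<k. \<Sum>l<k. (cnj (v j) * v l) * (if j = l then 1 else 0))"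
    using U by (intro sum.cong refl) (simp add: unitary_mat_def)
  also have "\<dots> = complex_of_real (normsq k v)"
    by (simp add: of_real_normsq if_distrib cong: if_cong)
  finally show ?thesis
    using of_real_eq_iff by blast
qed

lemma normsq_proj_disjoint_le:
  assumes "A \<inter> R = {}"
  shows "normsq k (proj A u) + normsq k (proj R u) + normsq k (proj ({..<k} - A - R) u) \<le> normsq k u"
proof -
  have "normsq k (proj A u) + normsq k (proj R u) + normsq k (proj ({..<k} - A - R) u)
      = (\<Sum>i<k. (cmod (proj A u i))\<^sup>2 + (cmod (proj R u i))\<^sup>2 + (cmod (proj ({..<k} - A - R) u i))\<^sup>2)"
    by (simp add: normsq_def sum.distrib)
  also have "\<dots> \<le> (\<Sum>i<k. (cmod (u i))\<^sup>2)"
    by (rule sum_mono) (use assms in \<open>auto simp: proj_def\<close>)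
  finally show ?thesis
    by (simp add: normsq_def)
qed

definition perm_mat :: "(nat \<Rightarrow> nat) \<Rightarrow> nat \<Rightarrow> nat \<Rightarrow> complex" where
  "perm_mat \<pi> = (\<lambda>i j. if i = \<pi> j then 1 else 0)"

lemma unitary_perm_mat:
  assumes "inj_on \<pi> {..<k}" "\<pi> ` {..<k} \<subseteq> {..<k}"
  shows "unitary_mat k (perm_mat \<pi>)"
  unfolding unitary_mat_def
proof (intro allI impI)
  fix i j assume ij: "i < k" "j < k"
  have "(\<Sum>l<k. cnj (perm_mat \<pi> l i) * perm_mat \<pi> l j) = (\<Sum>l<k. if l = \<pi> i then (if \<pi> i = \<pi> j then 1 else 0) else 0)"
    by (rule sum.cong) (auto simp: perm_mat_def)
  also have "\<dots> = (if i = j then 1 else 0)"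
    using assms ij by (auto simp: inj_on_def)
  finally show "(\<Sum>l<k. cnj (perm_mat \<pi> l i) * perm_mat \<pi> l j) = (if i = j then 1 else 0)" .
qed

lemma mat_app_perm_mat_basis:
  assumes "q < k" "\<pi> q < k"
  shows "mat_app k (perm_mat \<pi>) (basis q) = basis (\<pi> q)"
proof -
  have "(\<Sum>j<k. perm_mat \<pi> i j * basis q j) = (\<Sum>j<k. if j = q then perm_mat \<pi> i q else 0)" for i
    by (rule sum.cong) (auto simp: basis_def)
  then have "(\<Sum>j<k. perm_mat \<pi> i j * basis q j) = (if i = \<pi> q then 1 else 0)" for i
    using assms(1) by (simp add: perm_mat_def)
  then show ?thesis
    using assms(2) by (auto simp: mat_app_def basis_def fun_eq_iff)
qed

section \<open>Runs of a measure-many automaton\<close>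

abbreviation nonhalting :: "'s qfa \<Rightarrow> nat set" where
  "nonhalting M \<equiv> {..<nst M} - acc M - rej M"

abbreviation unitary_tape :: "'s qfa \<Rightarrow> 's list \<Rightarrow> bool" where
  "unitary_tape M w \<equiv> \<forall>a\<in>set w. unitary_mat (nst M) (delta M a)"

lemma unitary_tape_if_wf_qfa:
  assumes "wf_qfa A M" "set w \<subseteq> {LEnd, REnd} \<union> Sym ` A"
  shows "unitary_tape M w"
  using assms unfolding wf_qfa_def by (meson subsetD)

fun nonhalt_state :: "'s qfa \<Rightarrow> 's list \<Rightarrow> (nat \<Rightarrow> complex) \<Rightarrow> nat \<Rightarrow> complex" where
  "nonhalt_state M [] v = v"
| "nonhalt_state M (a # w) v = nonhalt_state M w (proj (nonhalting M) (mat_app (nst M) (delta M a) v))"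

lemma qrun_append:
  "qrun M (w @ w') v =
     (fst (qrun M w v) + fst (qrun M w' (nonhalt_state M w v)),
      snd (qrun M w v) + snd (qrun M w' (nonhalt_state M w v)))"
  by (induction w arbitrary: v) (auto simp: Let_def)

lemma qrun_nonneg: "0 \<le> fst (qrun M w v)" "0 \<le> snd (qrun M w v)"
  by (induction w arbitrary: v) (auto simp: Let_def normsq_nonneg)

lemma qrun_budget:
  assumes "acc M \<inter> rej M = {}" "unitary_tape M w"
  shows "fst (qrun M w v) + snd (qrun M w v) + normsq (nst M) (nonhalt_state M w v) \<le> normsq (nst M) v"
  using assms(2)
proof (induction w arbitrary: v)
  case Nil
  then show ?case by simp
next
  case (Cons a w)
  let ?u = "mat_app (nst M) (delta M a) v"
  have "normsq (nst M) (proj (acc M) ?u) + normsq (nst M) (proj (rej M) ?u)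
      + normsq (nst M) (proj (nonhalting M) ?u) \<le> normsq (nst M) ?u"
    by (rule normsq_proj_disjoint_le[OF assms(1)])
  also have "\<dots> = normsq (nst M) v"
    using Cons.prems by (simp add: normsq_mat_app_unitary)
  finally show ?case
    using Cons.IH[of "proj (nonhalting M) ?u"] Cons.prems by (simp add: Let_def)
qed

lemma fst_qrun_le_normsq:
  assumes "acc M \<inter> rej M = {}" "unitary_tape M w"
  shows "fst (qrun M w v) \<le> normsq (nst M) v"
  using qrun_budget[OF assms, of v] qrun_nonneg(2)[of M w v] normsq_nonneg[of "nst M" "nonhalt_state M w v"]
  by linarith

lemma p_acc_add_p_rej_le:
  assumes "wf_qfa A M" "set w \<subseteq> A"
  shows "p_acc M w + p_rej M w \<le> 1"
proof -
  let ?t = "LEnd # map Sym w @ [REnd]"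
  have disj: "acc M \<inter> rej M = {}" and unitary: "unitary_tape M ?t" and q0: "q0 M < nst M"
    using assms by (auto simp: wf_qfa_def)
  have "fst (qrun M ?t (basis (q0 M))) + snd (qrun M ?t (basis (q0 M)))
      + normsq (nst M) (nonhalt_state M ?t (basis (q0 M))) \<le> normsq (nst M) (basis (q0 M))"
    by (rule qrun_budget[OF disj unitary])
  then show ?thesis
    unfolding p_acc_def p_rej_def
    using normsq_basis[OF q0] normsq_nonneg[of "nst M" "nonhalt_state M ?t (basis (q0 M))"] by linarith
qed

text \<open>The square root of the acceptance probability is a seminorm of the initial vector:
  every measurement outcome contributes the norm of a linear image of it.\<close>

lemma sqrt_fst_qrun_add_le:
  "sqrt (fst (qrun M w (v + v'))) \<le> sqrt (fst (qrun M w v)) + sqrt (fst (qrun M w v'))"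
proof (induction w arbitrary: v v')
  case Nil
  then show ?case by simp
next
  case (Cons a w)
  let ?k = "nst M" and ?U = "delta M a"
  define p where "p x = sqrt (normsq ?k (proj (acc M) (mat_app ?k ?U x)))" for x
  define r where "r x = sqrt (fst (qrun M w (proj (nonhalting M) (mat_app ?k ?U x))))" for x
  have split: "sqrt (fst (qrun M (a # w) x)) = sqrt ((p x)\<^sup>2 + (r x)\<^sup>2)" for x
    by (simp add: p_def r_def Let_def normsq_nonneg qrun_nonneg)
  have "p (v + v') \<le> p v + p v'"
    unfolding p_def mat_app_add proj_add by (rule sqrt_normsq_add_le)
  moreover have "r (v + v') \<le> r v + r v'"
    unfolding r_def mat_app_add proj_add by (rule Cons.IH)
  moreover have "0 \<le> p (v + v')" "0 \<le> r (v + v')"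
    by (simp_all add: p_def r_def normsq_nonneg qrun_nonneg)
  ultimately have "sqrt ((p (v + v'))\<^sup>2 + (r (v + v'))\<^sup>2) \<le> sqrt ((p v + p v')\<^sup>2 + (r v + r v')\<^sup>2)"
    by (intro real_sqrt_le_mono add_mono power_mono) auto
  also have "\<dots> \<le> sqrt ((p v)\<^sup>2 + (r v)\<^sup>2) + sqrt ((p v')\<^sup>2 + (r v')\<^sup>2)"
    by (rule real_sqrt_sum_squares_triangle_ineq)
  finally show ?case
    by (simp only: split)
qed

lemma sqrt_fst_qrun_diff_le:
  assumes "acc M \<inter> rej M = {}" "unitary_tape M w"
  shows "\<bar>sqrt (fst (qrun M w v)) - sqrt (fst (qrun M w v'))\<bar> \<le> sqrt (normsq (nst M) (v - v'))"
proof -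
  have "sqrt (fst (qrun M w x)) \<le> sqrt (fst (qrun M w x')) + sqrt (normsq (nst M) (v - v'))"
    if "x - x' = v - v' \<or> x - x' = v' - v" for x x'
  proof -
    have "normsq (nst M) (x - x') = normsq (nst M) (v - v')"
      using that normsq_minus_commute[of "nst M" v' v] by auto
    then have "sqrt (fst (qrun M w (x - x'))) \<le> sqrt (normsq (nst M) (v - v'))"
      using fst_qrun_le_normsq[OF assms, of "x - x'"] by simp
    moreover have "sqrt (fst (qrun M w x)) \<le> sqrt (fst (qrun M w (x - x'))) + sqrt (fst (qrun M w x'))"
      using sqrt_fst_qrun_add_le[of M w "x - x'" x'] by simp
    ultimately show ?thesis
      by linarith
  qed
  from this[of v v'] this[of v' v] show ?thesis
    by auto
qed

lemma fst_qrun_diff_le: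
  assumes "acc M \<inter> rej M = {}" "unitary_tape M w"
    and "normsq (nst M) v \<le> 1" "normsq (nst M) v' \<le> 1"
  shows "\<bar>fst (qrun M w v) - fst (qrun M w v')\<bar> \<le> 2 * sqrt (normsq (nst M) (v - v'))"
proof -
  define a where "a = sqrt (fst (qrun M w v))"
  define b where "b = sqrt (fst (qrun M w v'))"
  have "0 \<le> a" "a \<le> 1" "0 \<le> b" "b \<le> 1"
    using fst_qrun_le_normsq[OF assms(1,2), of v] fst_qrun_le_normsq[OF assms(1,2), of v'] assms(3,4)
    by (simp_all add: a_def b_def qrun_nonneg)
  moreover have "\<bar>a - b\<bar> \<le> sqrt (normsq (nst M) (v - v'))"
    unfolding a_def b_def by (rule sqrt_fst_qrun_diff_le[OF assms(1,2)])
  ultimately have "\<bar>a - b\<bar> * (a + b) \<le> sqrt (normsq (nst M) (v - v')) * 2"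
    by (intro mult_mono) (auto simp: normsq_nonneg)
  moreover have "fst (qrun M w v) - fst (qrun M w v') = (a - b) * (a + b)"
    using qrun_nonneg(1)[of M w v] qrun_nonneg(1)[of M w v'] by (simp add: a_def b_def algebra_simps)
  ultimately show ?thesis
    using \<open>0 \<le> a\<close> \<open>0 \<le> b\<close> by (simp add: abs_mult)
qed

lemma fst_qrun_append_diff_le:
  assumes "acc M \<inter> rej M = {}" "unitary_tape M w" "unitary_tape M w'" "unitary_tape M s"
    and "normsq (nst M) v \<le> 1"
  shows "\<bar>fst (qrun M (w @ s) v) - fst (qrun M (w' @ s) v)\<bar>
       \<le> \<bar>fst (qrun M w v) - fst (qrun M w' v)\<bar>
         + 2 * sqrt (normsq (nst M) (nonhalt_state M w v - nonhalt_state M w' v))"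
proof -
  have "normsq (nst M) (nonhalt_state M x v) \<le> 1" if "unitary_tape M x" for x
    using qrun_budget[OF assms(1) that, of v] qrun_nonneg[of M x v] assms(5) by linarith
  then have "\<bar>fst (qrun M s (nonhalt_state M w v)) - fst (qrun M s (nonhalt_state M w' v))\<bar>
      \<le> 2 * sqrt (normsq (nst M) (nonhalt_state M w v - nonhalt_state M w' v))"
    using assms(2,3) by (intro fst_qrun_diff_le[OF assms(1,4)])
  then show ?thesis
    by (simp add: qrun_append)
qed

lemma fst_qrun_append_diff_lt:
  assumes "acc M \<inter> rej M = {}" "unitary_tape M w" "unitary_tape M w'" "unitary_tape M s"
    and "normsq (nst M) v \<le> 1"
    and "\<bar>fst (qrun M w v) - fst (qrun M w' v)\<bar> < d"
    and "\<And>i. i < nst M \<Longrightarrow> \<bar>Re (nonhalt_state M w v i - nonhalt_state M w' v i)\<bar> < d"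
    and "\<And>i. i < nst M \<Longrightarrow> \<bar>Im (nonhalt_state M w v i - nonhalt_state M w' v i)\<bar> < d"
  shows "\<bar>fst (qrun M (w @ s) v) - fst (qrun M (w' @ s) v)\<bar> < d * (4 * nst M + 1)"
proof -
  let ?x = "nonhalt_state M w v - nonhalt_state M w' v"
  have "sqrt (normsq (nst M) ?x) \<le> (\<Sum>i<nst M. cmod (?x i))"
    by (rule sqrt_normsq_le_sum)
  also have "\<dots> \<le> (\<Sum>i<nst M. 2 * d)"
  proof (rule sum_mono)
    fix i assume "i \<in> {..<nst M}"
    then show "cmod (?x i) \<le> 2 * d"
      using cmod_le[of "?x i"] assms(7,8)[of i] by simp
  qed
  finally have "2 * sqrt (normsq (nst M) ?x) \<le> 4 * d * nst M"
    by (simp add: algebra_simps)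
  then show ?thesis
    using fst_qrun_append_diff_le[OF assms(1-5)] assms(6) by (simp add: algebra_simps)
qed

lemma configuration_bounded:
  assumes "acc M \<inter> rej M = {}" "unitary_tape M w" "normsq (nst M) v \<le> 1"
  shows "\<bar>fst (qrun M w v)\<bar> \<le> 1" "i < nst M \<Longrightarrow> cmod (nonhalt_state M w v i) \<le> 1"
proof -
  have budget: "fst (qrun M w v) + normsq (nst M) (nonhalt_state M w v) \<le> 1"
    using qrun_budget[OF assms(1,2), of v] qrun_nonneg(2)[of M w v] assms(3) by linarith
  then show "\<bar>fst (qrun M w v)\<bar> \<le> 1"
    using qrun_nonneg(1)[of M w v] normsq_nonneg[of "nst M" "nonhalt_state M w v"] by linarith
  assume "i < nst M"
  then have "cmod (nonhalt_state M w v i) \<le> sqrt (normsq (nst M) (nonhalt_state M w v))"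
    by (rule cmod_le_sqrt_normsq)
  also have "\<dots> \<le> 1"
    using budget qrun_nonneg(1)[of M w v] by simp
  finally show "cmod (nonhalt_state M w v i) \<le> 1" .
qed

section \<open>Deterministic advice does not suffice\<close>

lemma close_pair_by_pigeonhole:
  fixes f :: "'a \<Rightarrow> nat \<Rightarrow> real"
  assumes "finite U" "d > 0" "(nat \<lfloor>2 / d\<rfloor> + 1) ^ n < card U"
    and "\<And>u j. u \<in> U \<Longrightarrow> j < n \<Longrightarrow> \<bar>f u j\<bar> \<le> 1"
  obtains u u' where "u \<in> U" "u' \<in> U" "u \<noteq> u'" "\<And>j. j < n \<Longrightarrow> \<bar>f u j - f u' j\<bar> < d"
proof -
  define cell where "cell x = nat \<lfloor>(x + 1) / d\<rfloor>" for x :: real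
  define B where "B = nat \<lfloor>2 / d\<rfloor>"
  have cell_le: "cell x \<le> B" if "x \<le> 1" for x
    unfolding cell_def B_def using that assms(2) by (intro nat_mono floor_mono divide_right_mono) auto
  have cell_eq: "\<bar>x - x'\<bar> < d" if "-1 \<le> x" "-1 \<le> x'" "cell x = cell x'" for x x'
  proof -
    have "0 \<le> (x + 1) / d" "0 \<le> (x' + 1) / d"
      using that assms(2) by simp_all
    then have "\<lfloor>(x + 1) / d\<rfloor> = \<lfloor>(x' + 1) / d\<rfloor>"
      using that(3) by (simp add: cell_def eq_nat_nat_iff)
    then have "\<bar>(x + 1) / d - (x' + 1) / d\<bar> < 1"
      using floor_correct[of "(x + 1) / d"] floor_correct[of "(x' + 1) / d"] by linarith
    also have "(x + 1) / d - (x' + 1) / d = (x - x') / d"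
      using assms(2) by (simp add: field_simps)
    finally show ?thesis
      using assms(2) by (simp add: divide_less_eq)
  qed
  define cells where "cells u = map (\<lambda>j. cell (f u j)) [0..<n]" for u
  have "cells u \<in> {xs. set xs \<subseteq> {..B} \<and> length xs = n}" if "u \<in> U" for u
  proof -
    have "f u j \<le> 1" if "j < n" for j
      using assms(4)[OF \<open>u \<in> U\<close> that] by linarith
    then show ?thesis
      by (auto simp: cells_def intro: cell_le)
  qed
  then have "cells ` U \<subseteq> {xs. set xs \<subseteq> {..B} \<and> length xs = n}"
    by blast
  moreover have "finite {xs. set xs \<subseteq> {..B} \<and> length xs = n}"
    by (simp add: finite_lists_length_eq)
  ultimately have "inj_on cells U \<Longrightarrow> card U \<le> card {xs. set xs \<subseteq> {..B} \<and> length xs = n}"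
    using card_inj_on_le by blast
  moreover have "card {xs. set xs \<subseteq> {..B} \<and> length xs = n} < card U"
    using assms(3) by (simp add: card_lists_length_eq B_def)
  ultimately have "\<not> inj_on cells U"
    by linarith
  then obtain u u' where "u \<in> U" "u' \<in> U" "u \<noteq> u'" "cells u = cells u'"
    by (auto simp: inj_on_def)
  moreover have "\<bar>f u j - f u' j\<bar> < d" if "j < n" for j
  proof -
    have "cell (f u j) = cell (f u' j)"
      using \<open>cells u = cells u'\<close> that by (auto simp: cells_def map_eq_conv)
    then show ?thesis
      using assms(4)[of u j] assms(4)[of u' j] \<open>u \<in> U\<close> \<open>u' \<in> U\<close> that by (intro cell_eq) auto
  qed
  ultimately show thesis
    using that by blast
qed

text \<open>The configuration after prefix \<open>P u\<close>, encoded as \<open>f u\<close> (real and imaginary parts of the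
  non-halting state vector, then the acceptance probability so far), lies in the cube
  \<open>[-1, 1]\<close> to the power \<open>2 nst M + 1\<close>.\<close>

lemma indistinguishable_prefixes:
  fixes d :: real
  assumes disj: "acc M \<inter> rej M = {}" and norm_v: "normsq (nst M) v \<le> 1"
    and unitary: "\<And>u. u \<in> U \<Longrightarrow> unitary_tape M (P u)"
    and "finite U" "d > 0" and many: "(nat \<lfloor>2 / d\<rfloor> + 1) ^ (2 * nst M + 1) < card U"
  obtains u u' where "u \<in> U" "u' \<in> U" "u \<noteq> u'"
    and "\<And>s. unitary_tape M s \<Longrightarrow>
           \<bar>fst (qrun M (P u @ s) v) - fst (qrun M (P u' @ s) v)\<bar> < d * (4 * nst M + 1)"
proof -
  let ?k = "nst M"
  define f where "f u j = (if j < ?k then Re (nonhalt_state M (P u) v j)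
      else if j < 2 * ?k then Im (nonhalt_state M (P u) v (j - ?k))
      else fst (qrun M (P u) v))" for u j
  have bound: "\<bar>f u j\<bar> \<le> 1" if "u \<in> U" "j < 2 * ?k + 1" for u j
  proof -
    note bounded = configuration_bounded[OF disj unitary[OF \<open>u \<in> U\<close>] norm_v]
    have "cmod (nonhalt_state M (P u) v (j - ?k)) \<le> 1" if "j < 2 * ?k"
      using bounded(2)[of "j - ?k"] that by simp
    then show ?thesis
      using bounded(1) bounded(2)[of j]
        abs_Re_le_cmod[of "nonhalt_state M (P u) v j"]
        abs_Im_le_cmod[of "nonhalt_state M (P u) v (j - ?k)"]
      by (auto simp: f_def)
  qed
  obtain u u' where uU: "u \<in> U" "u' \<in> U" "u \<noteq> u'"
    and close: "\<And>j. j < 2 * ?k + 1 \<Longrightarrow> \<bar>f u j - f u' j\<bar> < d"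
    using close_pair_by_pigeonhole[of U d "2 * ?k + 1" f, OF \<open>finite U\<close> \<open>d > 0\<close> many bound] by blast
  moreover have "\<bar>fst (qrun M (P u @ s) v) - fst (qrun M (P u' @ s) v)\<bar> < d * (4 * ?k + 1)"
    if "unitary_tape M s" for s
  proof (rule fst_qrun_append_diff_lt[OF disj unitary[OF uU(1)] unitary[OF uU(2)] that norm_v])
    show "\<bar>fst (qrun M (P u) v) - fst (qrun M (P u') v)\<bar> < d"
      using close[of "2 * ?k"] by (simp add: f_def)
    show "\<bar>Re (nonhalt_state M (P u) v i - nonhalt_state M (P u') v i)\<bar> < d" if "i < ?k" for i
      using close[of i] that by (simp add: f_def)
    show "\<bar>Im (nonhalt_state M (P u) v i - nonhalt_state M (P u') v i)\<bar> < d" if "i < ?k" for i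
      using close[of "i + ?k"] that by (simp add: f_def)
  qed
  ultimately show thesis
    using that by blast
qed

lemma p_acc_gap:
  assumes "wf_qfa A M" "set w' \<subseteq> A" "1 - \<epsilon> \<le> p_acc M w" "1 - \<epsilon> \<le> p_rej M w'"
  shows "1 - 2 * \<epsilon> \<le> p_acc M w - p_acc M w'"
  using p_acc_add_p_rej_le[OF assms(1,2)] assms(3,4) by linarith

lemma set_zip_subset_times: "set xs \<subseteq> A \<Longrightarrow> set ys \<subseteq> B \<Longrightarrow> set (zip xs ys) \<subseteq> A \<times> B"
  by (auto dest: set_zip_leftD set_zip_rightD)

lemma tape_zip_append:
  "LEnd # map Sym (zip (u @ v) y) @ [REnd]
     = (LEnd # map Sym (zip u (take (length u) y))) @ (map Sym (zip v (drop (length u) y)) @ [REnd])"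
  by (simp add: zip_append1)

definition odd_or_square :: "nat list set" where
  "odd_or_square = {x \<in> lists {0,1}. odd (length x) \<or> take (length x div 2) x = drop (length x div 2) x}"

lemma odd_or_square_not_in_1QFA_n: "\<not> in_1QFA_n {0,1} odd_or_square"
proof
  assume "in_1QFA_n {0,1} odd_or_square"
  then obtain \<Gamma> :: "nat set" and M :: "(nat \<times> nat) tsym qfa" and \<epsilon> :: real and h where
    wf: "wf_qfa ({0,1} \<times> \<Gamma>) M" and \<epsilon>: "\<epsilon> < 1/2"
    and h: "\<forall>n. length (h n) = n \<and> set (h n) \<subseteq> \<Gamma>"
    and correct: "\<forall>x \<in> lists {0,1}.
       (x \<in> odd_or_square \<longrightarrow> p_acc M (zip x (h (length x))) \<ge> 1 - \<epsilon>) \<and>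
       (x \<notin> odd_or_square \<longrightarrow> p_rej M (zip x (h (length x))) \<ge> 1 - \<epsilon>)"
    unfolding in_1QFA_n_def by blast
  let ?k = "nst M" and ?b = "basis (q0 M)"
  define d where "d = (1 - 2 * \<epsilon>) / (4 * ?k + 1)"
  define m where "m = (nat \<lfloor>2 / d\<rfloor> + 1) ^ (2 * ?k + 1)"
  define U where "U = {u :: nat list. set u \<subseteq> {0,1} \<and> length u = m}"
  define y where "y = h (2 * m)"
  define pre where "pre (u :: nat list) = LEnd # map Sym (zip u (take m y))" for u
  define suf where "suf (v :: nat list) = map Sym (zip v (drop m y)) @ [REnd]" for v
  have "d > 0"
    using \<epsilon> by (simp add: d_def)
  have advice: "set (take m y) \<subseteq> \<Gamma>" "set (drop m y) \<subseteq> \<Gamma>"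
    using h set_take_subset[of m y] set_drop_subset[of m y] by (auto simp: y_def)
  have unitary: "unitary_tape M (pre u)" "unitary_tape M (suf u)" if "u \<in> U" for u
  proof -
    have "set u \<subseteq> {0,1}"
      using that by (simp add: U_def)
    note zips = set_zip_subset_times[OF this advice(1)] set_zip_subset_times[OF this advice(2)]
    show "unitary_tape M (pre u)"
      by (rule unitary_tape_if_wf_qfa[OF wf]) (use zips in \<open>auto simp: pre_def\<close>)
    show "unitary_tape M (suf u)"
      by (rule unitary_tape_if_wf_qfa[OF wf]) (use zips in \<open>auto simp: suf_def\<close>)
  qed
  have "card U = 2 ^ m"
    using card_lists_length_eq[of "{0::nat,1}" m] by (simp add: U_def numeral_2_eq_2)
  then have many: "(nat \<lfloor>2 / d\<rfloor> + 1) ^ (2 * ?k + 1) < card U"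
    unfolding m_def[symmetric] using less_exp[of m] by simp
  have "acc M \<inter> rej M = {}" "normsq ?k ?b \<le> 1" "finite U"
    using wf by (auto simp: wf_qfa_def normsq_basis U_def finite_lists_length_eq)
  then obtain u u' where uU: "u \<in> U" "u' \<in> U" "u \<noteq> u'"
    and close: "\<bar>fst (qrun M (pre u @ suf u) ?b) - fst (qrun M (pre u' @ suf u) ?b)\<bar> < d * (4 * ?k + 1)"
    using indistinguishable_prefixes[of M ?b U pre d] unitary \<open>d > 0\<close> many by metis
  have tape: "p_acc M (zip (w @ u) (h (length (w @ u)))) = fst (qrun M (pre w @ suf u) ?b)" if "w \<in> U" for w
    using that uU(1) tape_zip_append[of w u y] by (simp add: p_acc_def U_def y_def pre_def suf_def mult_2)
  have square: "u @ u \<in> lists {0,1}" "u @ u \<in> odd_or_square"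
    and non_square: "u' @ u \<in> lists {0,1}" "u' @ u \<notin> odd_or_square"
    using uU by (auto simp: odd_or_square_def U_def)
  have "1 - 2 * \<epsilon> \<le> p_acc M (zip (u @ u) (h (length (u @ u)))) - p_acc M (zip (u' @ u) (h (length (u' @ u))))"
  proof (rule p_acc_gap[OF wf])
    show "set (zip (u' @ u) (h (length (u' @ u)))) \<subseteq> {0,1} \<times> \<Gamma>"
      using non_square(1) h by (intro set_zip_subset_times) auto
    show "1 - \<epsilon> \<le> p_acc M (zip (u @ u) (h (length (u @ u))))"
      using bspec[OF correct square(1)] square(2) by blast
    show "1 - \<epsilon> \<le> p_rej M (zip (u' @ u) (h (length (u' @ u))))"
      using bspec[OF correct non_square(1)] non_square(2) by blast
  qed
  also have "\<dots> < 1 - 2 * \<epsilon>"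
    using close tape[OF uU(1)] tape[OF uU(2)] by (simp add: d_def)
  finally show False
    by simp
qed

section \<open>Recognition with randomized advice\<close>

text \<open>The advice symbol counts only under an input 1; the automaton adds these counts modulo 4 in
  the states 0..3 and, on the right endmarker, moves counter value c to state c + 4, so that it
  accepts iff the total vanishes modulo 4.\<close>

definition track_weight :: "nat \<times> nat \<Rightarrow> nat" where
  "track_weight p = (if fst p = 1 then snd p else 0)"

abbreviation weight :: "(nat \<times> nat) list \<Rightarrow> nat" where
  "weight z \<equiv> sum_list (map track_weight z)"

fun counter_perm :: "(nat \<times> nat) tsym \<Rightarrow> nat \<Rightarrow> nat" where
  "counter_perm LEnd q = q"
| "counter_perm REnd q = (if q < 4 then q + 4 else if q < 8 then q - 4 else q)"
| "counter_perm (Sym p) q = (if q < 4 then (q + track_weight p) mod 4 else q)"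

definition counter_qfa :: "(nat \<times> nat) tsym qfa" where
  "counter_qfa = \<lparr>nst = 8, delta = (\<lambda>a. perm_mat (counter_perm a)), q0 = 0, acc = {4}, rej = {5, 6, 7}\<rparr>"

lemma less_4_cases: "n < (4::nat) \<Longrightarrow> n = 0 \<or> n = 1 \<or> n = 2 \<or> n = 3"
  by auto

lemma add_mod_4_inj:
  assumes "q < 4" "q' < 4" "(q + c) mod 4 = (q' + c) mod (4::nat)"
  shows "q = q'"
proof -
  have "(q + c mod 4) mod 4 = (q' + c mod 4) mod 4"
    using assms(3) by (simp add: mod_add_right_eq)
  moreover have "c mod 4 < 4"
    by simp
  ultimately show ?thesis
    using less_4_cases[OF assms(1)] less_4_cases[OF assms(2)] less_4_cases[of "c mod 4"] by auto
qed

lemma counter_perm_less: "q < 8 \<Longrightarrow> counter_perm a q < 8"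
  by (cases a) auto

lemma inj_on_counter_perm: "inj_on (counter_perm a) {..<8}"
proof (rule inj_onI)
  fix i j
  assume ij: "i \<in> {..<8}" "j \<in> {..<8}" "counter_perm a i = counter_perm a j"
  show "i = j"
  proof (cases a)
    case (Sym p)
    have "(x + track_weight p) mod 4 < 4" for x
      by simp
    then show ?thesis
      using ij Sym add_mod_4_inj[of i j "track_weight p"] by (auto split: if_splits)
  qed (use ij in \<open>auto split: if_splits\<close>)
qed

lemma wf_counter_qfa: "wf_qfa A counter_qfa"
proof -
  have "unitary_mat 8 (perm_mat (counter_perm a))" for a
    by (rule unitary_perm_mat[OF inj_on_counter_perm]) (auto simp: counter_perm_less)
  then show ?thesis
    by (simp add: wf_qfa_def counter_qfa_def)
qed

lemma counter_qfa_step: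
  "q < 8 \<Longrightarrow> mat_app (nst counter_qfa) (delta counter_qfa a) (basis q) = basis (counter_perm a q)"
  by (simp add: counter_qfa_def mat_app_perm_mat_basis counter_perm_less)

lemma qrun_counter_qfa:
  "q < 4 \<Longrightarrow> qrun counter_qfa (map Sym z @ [REnd]) (basis q)
     = (if (q + weight z) mod 4 = 0 then (1, 0) else (0, 1))"
proof (induction z arbitrary: q)
  case Nil
  then show ?case
    using less_4_cases[OF Nil] counter_qfa_step[of q REnd]
    by (auto simp: Let_def proj_basis normsq_basis normsq_zero counter_qfa_def)
next
  case (Cons p z)
  define q' where "q' = (q + track_weight p) mod 4"
  have "q' < 4"
    by (simp add: q'_def)
  have "mat_app (nst counter_qfa) (delta counter_qfa (Sym p)) (basis q) = basis q'"
    using counter_qfa_step[of q "Sym p"] Cons.prems by (simp add: q'_def)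
  moreover have "(q' + weight z) mod 4 = (q + weight (p # z)) mod 4"
    by (simp add: q'_def mod_add_left_eq add.assoc)
  ultimately show ?case
    using Cons.IH[OF \<open>q' < 4\<close>] \<open>q' < 4\<close>
    by (simp add: Let_def proj_basis normsq_zero counter_qfa_def)
qed

lemma p_acc_counter_qfa: "p_acc counter_qfa w = (if weight w mod 4 = 0 then 1 else 0)"
  and p_rej_counter_qfa: "p_rej counter_qfa w = (if weight w mod 4 = 0 then 0 else 1)"
proof -
  have "qrun counter_qfa (LEnd # map Sym w @ [REnd]) (basis (q0 counter_qfa))
      = qrun counter_qfa (map Sym w @ [REnd]) (basis 0)"
    using counter_qfa_step[of 0 LEnd] by (simp add: Let_def proj_basis normsq_zero counter_qfa_def)
  then show "p_acc counter_qfa w = (if weight w mod 4 = 0 then 1 else 0)"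
    "p_rej counter_qfa w = (if weight w mod 4 = 0 then 0 else 1)"
    using qrun_counter_qfa[of 0 w] by (simp_all add: p_acc_def p_rej_def)
qed

definition neg4 :: "nat \<Rightarrow> nat" where
  "neg4 r = (4 - r) mod 4"

definition Z4_words :: "nat \<Rightarrow> nat list set" where
  "Z4_words m = {rs. set rs \<subseteq> {..<4} \<and> length rs = m}"

lemma finite_Z4_words: "finite (Z4_words m)"
  unfolding Z4_words_def by (rule finite_lists_length_eq) simp

lemma card_Z4_words: "card (Z4_words m) = 4 ^ m"
  unfolding Z4_words_def using card_lists_length_eq[of "{..<4::nat}" m] by simp

lemma Z4_words_nonempty: "Z4_words m \<noteq> {}"
proof -
  have "replicate m 0 \<in> Z4_words m"
    by (auto simp: Z4_words_def)
  then show ?thesis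
    by blast
qed

lemma Z4_words_0: "Z4_words 0 = {[]}"
  by (auto simp: Z4_words_def)

lemma sum_Z4_words_Suc: "(\<Sum>rs\<in>Z4_words (Suc m). f rs) = (\<Sum>r<4. \<Sum>rs\<in>Z4_words m. f (r # rs))"
proof -
  have "Z4_words (Suc m) = (\<lambda>(r, rs). r # rs) ` ({..<4} \<times> Z4_words m)"
    by (auto simp: Z4_words_def length_Suc_conv image_iff)
  moreover have "inj_on (\<lambda>(r, rs). r # rs) ({..<4::nat} \<times> Z4_words m)"
    by (auto simp: inj_on_def)
  ultimately show ?thesis
    by (simp add: sum.reindex sum.cartesian_product case_prod_unfold)
qed

definition zero_sum_count :: "nat \<Rightarrow> nat list \<Rightarrow> nat list \<Rightarrow> real" where
  "zero_sum_count K w w' = (\<Sum>rs\<in>Z4_words (length w).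
     if (K + weight (zip w rs) + weight (zip w' (map neg4 rs))) mod 4 = 0 then 1 else 0)"

lemma sum_digit_zero_count:
  assumes "a \<in> {0,1}" "b \<in> {0,1}"
  shows "(\<Sum>r<4. if (K + track_weight (a, r) + track_weight (b, neg4 r)) mod 4 = 0 then 1 else (0::real))
       = (if a = b then (if K mod 4 = 0 then 4 else 0) else 1)"
proof -
  define k0 where "k0 = K mod 4"
  have "k0 < 4"
    by (simp add: k0_def)
  have shift: "(K + x) mod 4 = (k0 + x) mod 4" for x
    by (simp add: k0_def mod_add_left_eq)
  have "{..<4::nat} = {0,1,2,3}"
    by auto
  then have "(\<Sum>r<4. if (K + track_weight (a, r) + track_weight (b, neg4 r)) mod 4 = 0 then 1 else (0::real))
      = (\<Sum>r\<in>{0,1,2,3}. if (k0 + (track_weight (a, r) + track_weight (b, neg4 r))) mod 4 = 0 then 1 else 0)"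
    by (simp only: add.assoc shift)
  also have "\<dots> = (if a = b then (if k0 = 0 then 4 else 0) else 1)"
  proof -
    have "a = 0 \<or> a = 1" "b = 0 \<or> b = 1"
      using assms by auto
    then show ?thesis
      using less_4_cases[OF \<open>k0 < 4\<close>] by (elim disjE) (simp_all add: track_weight_def neg4_def)
  qed
  finally show ?thesis
    by (simp add: k0_def)
qed

text \<open>Positions where the two halves agree contribute nothing; at each position where they
  differ, exactly one of the four digits makes the total vanish.\<close>

lemma zero_sum_count_eq:
  assumes "length w' = length w" "set w \<subseteq> {0,1}" "set w' \<subseteq> {0,1}"
  shows "zero_sum_count K w w' =
    (if w = w' then (if K mod 4 = 0 then 4 ^ length w else 0) else 4 ^ length w / 4)"
  using assms
proof (induction w arbitrary: K w')
  case Nil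
  then show ?case
    by (simp add: zero_sum_count_def Z4_words_0)
next
  case (Cons a w)
  obtain b w1 where w': "w' = b # w1"
    using Cons.prems(1) by (cases w') auto
  have ab: "a \<in> {0,1}" "b \<in> {0,1}"
    using Cons.prems w' by auto
  let ?K = "\<lambda>r. K + track_weight (a, r) + track_weight (b, neg4 r)"
  have IH: "zero_sum_count (?K r) w w1 = (if w = w1 then (if ?K r mod 4 = 0 then 4 ^ length w else 0) else 4 ^ length w / 4)" for r
    using Cons.prems w' by (intro Cons.IH) auto
  have "zero_sum_count K (a # w) w' = (\<Sum>r<4. zero_sum_count (?K r) w w1)"
    unfolding zero_sum_count_def w' length_Cons sum_Z4_words_Suc by (simp add: add_ac)
  also have "\<dots> = (if a # w = w' then (if K mod 4 = 0 then 4 ^ length (a # w) else 0) else 4 ^ length (a # w) / 4)"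
  proof (cases "w = w1")
    case True
    have "(\<Sum>r<4. zero_sum_count (?K r) w w1) = 4 ^ length w * (\<Sum>r<4. if ?K r mod 4 = 0 then 1 else (0::real))"
      unfolding IH sum_distrib_left using True by (intro sum.cong) auto
    then show ?thesis
      using True w' by (simp add: sum_digit_zero_count[OF ab])
  next
    case False
    then show ?thesis
      using w' by (simp add: IH)
  qed
  finally show ?case .
qed

definition mirror :: "nat list \<Rightarrow> nat list" where
  "mirror rs = rs @ map neg4 rs"

text \<open>Advice for odd lengths is irrelevant, since every odd-length word is in the language.\<close>

definition mirror_advice :: "nat \<Rightarrow> nat list pmf" where
  "mirror_advice n = (if even n then map_pmf mirror (pmf_of_set (Z4_words (n div 2)))
     else return_pmf (replicate n 0))"

lemma set_pmf_mirror_advice: "set_pmf (mirror_advice n) \<subseteq> {y. length y = n \<and> set y \<subseteq> {..<4}}"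
proof (cases "even n")
  case True
  have "neg4 r < 4" for r
    by (simp add: neg4_def)
  then show ?thesis
    using True finite_Z4_words Z4_words_nonempty by (auto simp: mirror_advice_def mirror_def Z4_words_def)
qed (auto simp: mirror_advice_def)

lemma expectation_counter_qfa:
  assumes "x \<in> lists {0,1}" "even (length x)"
  defines "E \<equiv> \<lambda>f. measure_pmf.expectation (mirror_advice (length x)) (\<lambda>y. f counter_qfa (zip x y))"
  shows "E p_acc = (if x \<in> odd_or_square then 1 else 1/4)"
    and "E p_rej = (if x \<in> odd_or_square then 0 else 3/4)"
proof -
  define m where "m = length x div 2"
  define w where "w = take m x"
  define w' where "w' = drop m x"
  have len: "length w = m" "length w' = m"
    using assms(2) by (auto simp: w_def w'_def m_def)
  have bits: "set w \<subseteq> {0,1}" "set w' \<subseteq> {0,1}"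
    using assms(1) by (auto simp: w_def w'_def dest: in_set_takeD in_set_dropD)
  have weight_mirror: "weight (zip x (mirror rs)) = weight (zip w rs) + weight (zip w' (map neg4 rs))"
    if "rs \<in> Z4_words m" for rs
  proof -
    have "x = w @ w'"
      by (simp add: w_def w'_def)
    then show ?thesis
      using that len by (simp add: Z4_words_def mirror_def zip_append)
  qed
  have E: "E f = (\<Sum>rs\<in>Z4_words m. f counter_qfa (zip x (mirror rs))) / 4 ^ m" for f
    using assms(2) by (simp add: E_def mirror_advice_def m_def integral_pmf_of_set[OF Z4_words_nonempty finite_Z4_words] card_Z4_words)
  have count: "zero_sum_count 0 w w' = (if x \<in> odd_or_square then 4 ^ m else 4 ^ m / 4)"
    using zero_sum_count_eq[of w' w 0] len bits assms by (simp add: odd_or_square_def w_def w'_def m_def)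
  have "E p_acc = zero_sum_count 0 w w' / 4 ^ m"
    unfolding E zero_sum_count_def len(1)
    by (intro arg_cong[where f = "\<lambda>s. s / 4 ^ m"] sum.cong) (simp_all add: p_acc_counter_qfa weight_mirror)
  then show "E p_acc = (if x \<in> odd_or_square then 1 else 1/4)"
    by (simp add: count)
  have "E p_rej = (\<Sum>rs\<in>Z4_words m.
      1 - (if (weight (zip w rs) + weight (zip w' (map neg4 rs))) mod 4 = 0 then 1 else 0)) / 4 ^ m"
    unfolding E
    by (intro arg_cong[where f = "\<lambda>s. s / 4 ^ m"] sum.cong) (simp_all add: p_rej_counter_qfa weight_mirror)
  also have "\<dots> = (4 ^ m - zero_sum_count 0 w w') / 4 ^ m"
    by (simp add: sum_subtractf card_Z4_words zero_sum_count_def len(1))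
  finally have "E p_rej = (4 ^ m - zero_sum_count 0 w w') / 4 ^ m" .
  moreover have "(4 ^ m - 4 ^ m / 4) / 4 ^ m = (3/4 :: real)"
    by (simp add: field_simps)
  ultimately show "E p_rej = (if x \<in> odd_or_square then 0 else 3/4)"
    by (simp add: count)
qed

lemma odd_or_square_in_1QFA_Rn: "in_1QFA_Rn {0,1} odd_or_square"
proof -
  have correct: "\<forall>x \<in> lists {0,1}.
      (x \<in> odd_or_square \<longrightarrow> 1 - 1/4 \<le> measure_pmf.expectation (mirror_advice (length x)) (\<lambda>y. p_acc counter_qfa (zip x y)))
    \<and> (x \<notin> odd_or_square \<longrightarrow> 1 - 1/4 \<le> measure_pmf.expectation (mirror_advice (length x)) (\<lambda>y. p_rej counter_qfa (zip x y)))"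
    (is "\<forall>x \<in> _. ?correct x")
  proof
    fix x :: "nat list"
    assume x: "x \<in> lists {0,1}"
    show "?correct x"
    proof (cases "even (length x)")
      case True
      then show ?thesis
        using expectation_counter_qfa[OF x True] by simp
    next
      case False
      have "weight (zip x (replicate (length x) 0)) = 0"
        by (auto simp: sum_list_eq_0_iff track_weight_def dest: set_zip_rightD)
      then have "p_acc counter_qfa (zip x (replicate (length x) 0)) = 1"
        by (simp only: p_acc_counter_qfa) simp
      then have "measure_pmf.expectation (mirror_advice (length x)) (\<lambda>y. p_acc counter_qfa (zip x y)) = 1"
        using False by (simp add: mirror_advice_def)
      moreover have "x \<in> odd_or_square"
        using False x by (simp add: odd_or_square_def)
      ultimately show ?thesis
        by simp
    qed
  qed
  show ?thesis
    unfolding in_1QFA_Rn_def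
    by (intro exI[of _ "{..<4}"] exI[of _ counter_qfa] exI[of _ "1/4"] exI[of _ mirror_advice] conjI;
        (rule correct)?; simp add: wf_counter_qfa set_pmf_mirror_advice)
qed

theorem corollary5p3:
  shows "QFA_n \<noteq> QFA_Rn"
proof -
  have "({0,1}, odd_or_square) \<in> QFA_Rn"
    using odd_or_square_in_1QFA_Rn by (auto simp: QFA_Rn_def odd_or_square_def)
  moreover have "({0,1}, odd_or_square) \<notin> QFA_n"
    using odd_or_square_not_in_1QFA_n by (simp add: QFA_n_def)
  ultimately show ?thesis
    by blast
qed

end
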